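(* Let $(a,b)$ be a coprime pair of positive integers, let $W=W_1\cdots W_N=W(a,b)$, let $n_L$ and $n_R$ be the numbers of letters $L$ and $R$ in $W$, and let the integers $a_j$ ($-n_R\le j\le n_L$, $j\neq 0$), $c$, and $\overline{a}_j$ ($-n_L\le j\le n_R$) be constructed as described in the context. Then \[(a_1,a_2,\dots,a_{n_L},\,c,\,a_{-n_R},\dots,a_{-2},a_{-1})=(\overline{a}_{-n_L},\dots,\overline{a}_0,\dots,\overline{a}_{n_R}).\]
   Context: Word: for coprime positive $(a,b)$, set $(a_0,b_0)=(a,b)$; if $a_i>b_i$ let $w_{i+1}=L$, $(a_{i+1},b_{i+1})=(a_i-b_i,b_i)$; if $a_i<b_i$ let $w_{i+1}=R$, $(a_{i+1},b_{i+1})=(a_i,b_i-a_i)$; stop at the first $N$ with $(a_N,b_N)=(1,1)$. Then $w(a,b)=w_1\cdots w_N$ and $W(a,b)=W_1\cdots W_N$ with $W_i=w_{N+1-i}$. First sequence: each $\{a^{(i)}_j\}$ is a finite integer sequence indexed by the consecutive integers $m(i)\le j\le M(i)$ (the minimal and maximal defined index). Start with $(a^{(0)}_{-1},a^{(0)}_0,a^{(0)}_1)=(-1,-1,-1)$. For $i=1,\dots,N$, always $a^{(i)}_0=-1$, and: if $W_i=R$, set $a^{(i)}_j=a^{(i-1)}_j$ for $1<j\le M(i-1)$, $a^{(i)}_1=a^{(i-1)}_1-1$, $a^{(i)}_{-1}=-2$, and $a^{(i)}_j=a^{(i-1)}_{j+1}$ for $m(i-1)-1\le j<-1$; if $W_i=L$,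 set $a^{(i)}_j=a^{(i-1)}_j$ for $m(i-1)\le j<-1$, $a^{(i)}_{-1}=a^{(i-1)}_{-1}-1$, $a^{(i)}_1=-2$, and $a^{(i)}_j=a^{(i-1)}_{j-1}$ for $1<j\le M(i-1)+1$. After $N$ steps the index range is $-(n_R+1)\le j\le n_L+1$; put $a_j=a^{(N)}_j$ for $-n_R\le j\le n_L$, $j\ne0$, and $c=a^{(N)}_{n_L+1}+a^{(N)}_{-(n_R+1)}-2$. Second sequence: each $\{\overline{a}^{(i)}_j\}$ is indexed by consecutive integers $m(i)\le j\le M(i)$. Start with $\overline{a}^{(0)}_0=-4$. If $W_i=R$: $\overline{a}^{(i)}_{M(i-1)+1}=-2$, $\overline{a}^{(i)}_{m(i-1)}=\overline{a}^{(i-1)}_{m(i-1)}-1$, and $\overline{a}^{(i)}_j=\overline{a}^{(i-1)}_j$ for $m(i-1)<j\le M(i-1)$. If $W_i=L$: $\overline{a}^{(i)}_{M(i-1)}=\overline{a}^{(i-1)}_{M(i-1)}-1$, $\overline{a}^{(i)}_{m(i-1)-1}=-2$, and $\overline{a}^{(i)}_j=\overline{a}^{(i-1)}_j$ for $m(i-1)\le j<M(i-1)$. Put $\overline{a}_j=\overline{a}^{(N)}_j$, $-n_L\le j\le n_R$. *)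

theory Defs
  imports Main
begin

datatype letter = L | R

text \<open>The word w(a,b): subtractive Euclidean algorithm, stopping at (1,1).
  (The guards for zero / equal entries only matter outside the coprime positive case.)\<close>
function word :: "nat \<Rightarrow> nat \<Rightarrow> letter list" where
  "word a b =
     (if a = 0 \<or> b = 0 \<or> (a = 1 \<and> b = 1) then []
      else if b < a then L # word (a - b) b
      else if a < b then R # word a (b - a)
      else [])"
  by pat_completeness auto
termination by (relation "measure (\<lambda>(a, b). a + b)") auto

definition Word :: "nat \<Rightarrow> nat \<Rightarrow> letter list" where
  "Word a b = rev (word a b)"

text \<open>A finite integer sequence indexed by m \<le> j \<le> M, stored as (m, M, values).
  Values outside the index range are irrelevant (set to 0).\<close>
type_synonym iseq = "int \<times> int \<times> (int \<Rightarrow> int)"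

definition seq1_init :: iseq where
  "seq1_init = (-1, 1, (\<lambda>j. if -1 \<le> j \<and> j \<le> 1 then -1 else 0))"

fun seq1_step :: "iseq \<Rightarrow> letter \<Rightarrow> iseq" where
  "seq1_step (m, M, f) R =
     (m - 1, M, (\<lambda>j. if j = 0 then -1
                    else if 1 < j \<and> j \<le> M then f j
                    else if j = 1 then f 1 - 1
                    else if j = -1 then -2
                    else if m - 1 \<le> j \<and> j < -1 then f (j + 1)
                    else 0))"
| "seq1_step (m, M, f) L =
     (m, M + 1, (\<lambda>j. if j = 0 then -1
                    else if m \<le> j \<and> j < -1 then f j
                    else if j = -1 then f (-1) - 1
                    else if j = 1 then -2
                    else if 1 < j \<and> j \<le> M + 1 then f (j - 1)
                    else 0))"

definition seq1 :: "letter list \<Rightarrow> iseq" where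
  "seq1 W = foldl seq1_step seq1_init W"

definition seq2_init :: iseq where
  "seq2_init = (0, 0, (\<lambda>j. if j = 0 then -4 else 0))"

fun seq2_step :: "iseq \<Rightarrow> letter \<Rightarrow> iseq" where
  "seq2_step (m, M, f) R =
     (m, M + 1, (\<lambda>j. if j = M + 1 then -2
                    else if j = m then f m - 1
                    else if m < j \<and> j \<le> M then f j
                    else 0))"
| "seq2_step (m, M, f) L =
     (m - 1, M, (\<lambda>j. if j = M then f M - 1
                    else if j = m - 1 then -2
                    else if m \<le> j \<and> j < M then f j
                    else 0))"

definition seq2 :: "letter list \<Rightarrow> iseq" where
  "seq2 W = foldl seq2_step seq2_init W"

definition nL :: "letter list \<Rightarrow> nat" where
  "nL W = length (filter (\<lambda>x. x = L) W)"

definition nR :: "letter list \<Rightarrow> nat" where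
  "nR W = length (filter (\<lambda>x. x = R) W)"

end

theory Submission
  imports Defs
begin

text \<open>Neither coprimality nor the particular word matters. For every word \<open>W\<close> the first
  sequence occupies the indices \<open>-(n\<^sub>R+1) .. n\<^sub>L+1\<close>, the second \<open>-n\<^sub>L .. n\<^sub>R\<close>, and the
  second is the first with its positive part shifted down by \<open>n\<^sub>L+1\<close>, its negative part shifted
  up by \<open>n\<^sub>R+1\<close> and the two boundary entries merged into the value \<open>c\<close> at index 0. This
  reflection invariant is preserved letter by letter: appending \<open>L\<close> inserts \<open>-2\<close> at index 1 of
  the first sequence and at the new left end of the second, and decrements the entry just
  left of 0 in the first sequence resp. the right end of the second (symmetrically for \<open>R\<close>).\<close>

definition reflects :: "int \<Rightarrow> int \<Rightarrow> (int \<Rightarrow> int) \<Rightarrow> (int \<Rightarrow> int) \<Rightarrow> bool" where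
  "reflects l r f g \<longleftrightarrow>
     (\<forall>j. 1 \<le> j \<and> j \<le> l \<longrightarrow> g (j - l - 1) = f j) \<and>
     g 0 = f (l + 1) + f (- (r + 1)) - 2 \<and>
     (\<forall>j. - r \<le> j \<and> j \<le> -1 \<longrightarrow> g (j + r + 1) = f j)"

lemma map_upto_eq_if_reflects:
  assumes "0 \<le> l" and "0 \<le> r" and "reflects l r f g"
  shows "map f [1..l] @ [f (l + 1) + f (- (r + 1)) - 2] @ map f [- r..-1] = map g [- l..r]"
proof -
  have "[- l..r] = [- l..-1] @ 0 # [1..r]"
    using assms(1,2) upto_split3[of "- l" 0 r] by simp
  moreover have "[- l..-1] = map (\<lambda>j. j - l - 1) [1..l]"
    by (rule nth_equalityI) (auto simp: nth_upto)
  moreover have "[1..r] = map (\<lambda>j. j + r + 1) [- r..-1]"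
    by (rule nth_equalityI) (auto simp: nth_upto)
  ultimately show ?thesis
    using assms(3) by (auto simp: reflects_def)
qed

lemma seq1_index_range:
  "fst (seq1 W) = - int (nR W) - 1 \<and> fst (snd (seq1 W)) = int (nL W) + 1"
proof (induction W rule: rev_induct)
  case Nil
  then show ?case by (simp add: seq1_def seq1_init_def nL_def nR_def)
next
  case (snoc x W)
  then show ?case
    by (cases "seq1 W"; cases x) (auto simp: seq1_def nL_def nR_def)
qed

lemma seq2_index_range:
  "fst (seq2 W) = - int (nL W) \<and> fst (snd (seq2 W)) = int (nR W)"
proof (induction W rule: rev_induct)
  case Nil
  then show ?case by (simp add: seq2_def seq2_init_def nL_def nR_def)
next
  case (snoc x W)
  then show ?case
    by (cases "seq2 W"; cases x) (auto simp: seq2_def nL_def nR_def)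
qed

lemma reflects_step_L:
  assumes "0 \<le> l" and "0 \<le> r" and "reflects l r f g"
  shows "reflects (l + 1) r (snd (snd (seq1_step (- r - 1, l + 1, f) L)))
                            (snd (snd (seq2_step (- l, r, g) L)))"
    (is "reflects _ _ ?f ?g")
  unfolding reflects_def
proof (intro conjI allI impI)
  fix j assume j: "1 \<le> j \<and> j \<le> l + 1"
  show "?g (j - (l + 1) - 1) = ?f j"
  proof (cases "j = 1")
    case False
    then have "1 \<le> j - 1 \<and> j - 1 \<le> l"
      using j by simp
    then have "g (j - 1 - l - 1) = f (j - 1)"
      using assms(3) unfolding reflects_def by blast
    then show ?thesis
      using assms(1,2) j False by (simp add: algebra_simps)
  qed (use assms(1,2) in simp)
next
  show "?g 0 = ?f (l + 1 + 1) + ?f (- (r + 1)) - 2"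
    using assms by (cases "r = 0") (auto simp: reflects_def algebra_simps)
next
  fix j assume j: "- r \<le> j \<and> j \<le> -1"
  then show "?g (j + r + 1) = ?f j"
    using assms by (auto simp: reflects_def)
qed

lemma reflects_step_R:
  assumes "0 \<le> l" and "0 \<le> r" and "reflects l r f g"
  shows "reflects l (r + 1) (snd (snd (seq1_step (- r - 1, l + 1, f) R)))
                            (snd (snd (seq2_step (- l, r, g) R)))"
    (is "reflects _ _ ?f ?g")
  unfolding reflects_def
proof (intro conjI allI impI)
  fix j assume j: "1 \<le> j \<and> j \<le> l"
  then show "?g (j - l - 1) = ?f j"
    using assms by (auto simp: reflects_def)
next
  show "?g 0 = ?f (l + 1) + ?f (- (r + 1 + 1)) - 2"
    using assms by (cases "l = 0") (auto simp: reflects_def algebra_simps)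
next
  fix j assume j: "- (r + 1) \<le> j \<and> j \<le> -1"
  show "?g (j + (r + 1) + 1) = ?f j"
  proof (cases "j = -1")
    case False
    then have "- r \<le> j + 1 \<and> j + 1 \<le> -1"
      using j by simp
    then have "g (j + 1 + r + 1) = f (j + 1)"
      using assms(3) unfolding reflects_def by blast
    then show ?thesis
      using assms(1,2) j False by (simp add: algebra_simps)
  qed (use assms(1,2) in simp)
qed

lemma reflects_seq:
  "reflects (int (nL W)) (int (nR W)) (snd (snd (seq1 W))) (snd (snd (seq2 W)))"
proof (induction W rule: rev_induct)
  case Nil
  then show ?case
    by (simp add: reflects_def seq1_def seq1_init_def seq2_def seq2_init_def nL_def nR_def)
next
  case (snoc x W)
  obtain f where s1: "seq1 W = (- int (nR W) - 1, int (nL W) + 1, f)"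
    using seq1_index_range[of W] by (cases "seq1 W") auto
  obtain g where s2: "seq2 W = (- int (nL W), int (nR W), g)"
    using seq2_index_range[of W] by (cases "seq2 W") auto
  have IH: "reflects (int (nL W)) (int (nR W)) f g"
    using snoc.IH s1 s2 by simp
  have seq_snoc: "seq1 (W @ [x]) = seq1_step (- int (nR W) - 1, int (nL W) + 1, f) x"
                 "seq2 (W @ [x]) = seq2_step (- int (nL W), int (nR W), g) x"
    using s1 s2 by (simp_all add: seq1_def seq2_def)
  show ?case
  proof (cases x)
    case L
    have "reflects (int (nL W) + 1) (int (nR W))
            (snd (snd (seq1 (W @ [x])))) (snd (snd (seq2 (W @ [x]))))"
      unfolding seq_snoc unfolding L by (rule reflects_step_L[OF _ _ IH]) simp_all
    moreover have "int (nL (W @ [x])) = int (nL W) + 1" "nR (W @ [x]) = nR W"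
      using L by (simp_all add: nL_def nR_def)
    ultimately show ?thesis by simp
  next
    case R
    have "reflects (int (nL W)) (int (nR W) + 1)
            (snd (snd (seq1 (W @ [x])))) (snd (snd (seq2 (W @ [x]))))"
      unfolding seq_snoc unfolding R by (rule reflects_step_R[OF _ _ IH]) simp_all
    moreover have "nL (W @ [x]) = nL W" "int (nR (W @ [x])) = int (nR W) + 1"
      using R by (simp_all add: nL_def nR_def)
    ultimately show ?thesis by simp
  qed
qed

theorem lemma2p4:
  fixes a b :: nat
  assumes "0 < a" and "0 < b" and "coprime a b"
  defines "W \<equiv> Word a b"
  defines "n\<^sub>L \<equiv> int (nL W)" and "n\<^sub>R \<equiv> int (nR W)"
  defines "A \<equiv> snd (snd (seq1 W))" and "Abar \<equiv> snd (snd (seq2 W))"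
  defines "c \<equiv> A (n\<^sub>L + 1) + A (- (n\<^sub>R + 1)) - 2"
  shows "map A [1..n\<^sub>L] @ [c] @ map A [- n\<^sub>R..-1] = map Abar [- n\<^sub>L..n\<^sub>R]"
  unfolding c_def
  by (rule map_upto_eq_if_reflects) (simp_all add: n\<^sub>L_def n\<^sub>R_def A_def Abar_def reflects_seq)

end
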